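(* Let $r=r(n)\ge3$ and $m=m(n)$ be integers with $r=o(n^{1/2})$ and $\log(r^{-2}n)\le m=O(r^{-2}n)$. Then, as $n\to\infty$, \[ \frac{|\mathcal{H}^+_r(n,m)|}{|\mathcal{H}_r(n,m)|}=1-O\Bigl(\frac{r^6m^2}{n^3}\Bigr),\qquad \frac{|\mathcal{H}^{++}_r(n,m)|}{|\mathcal{H}_r(n,m)|}=1-O\Bigl(\frac{r^6m^2}{n^3}\Bigr). \]
   Context: $\mathcal{H}_r(n,m)$ is the set of $r$-uniform hypergraphs on $[n]$ with exactly $m$ edges. For such $H$, two edges are linked if they share exactly two vertices. Let $G_H$ be the graph whose vertices are the edges of $H$, two adjacent iff linked; a cluster of $H$ is the sub-hypergraph formed by the edges of a connected component of $G_H$ with at least two vertices. Set $M_0^*=\lceil\log(r^{-2}n)\rceil$, $M_0=M_0^*+2$, $M_4=\lceil\log(r^{-2}n)\rceil$ ($\log$ natural). $\mathcal{H}^+_r(n,m)$ is the set of $H\in\mathcal{H}_r(n,m)$ such that: (a) any two edges share at most two vertices; (b) every cluster consists of exactly two edges; (c) any two distinct clusters are vertex-disjoint; (d) there are at most $M_4$ clusters; (e) every vertex has degree at most $M_0$. $\mathcal{H}^{++}_r(n,m)$ is the subset of $\mathcal{H}^+_r(n,m)$ in which every vertex has degree at most $M_0^*$. *)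

theory Defs
  imports Complex_Main "HOL-Library.Landau_Symbols"
begin

definition hypergraphs :: "nat \<Rightarrow> nat \<Rightarrow> nat \<Rightarrow> nat set set set" where
  "hypergraphs r n m =
     {H. H \<subseteq> {e. e \<subseteq> {1..n} \<and> card e = r} \<and> card H = m}"

definition linked :: "nat set \<Rightarrow> nat set \<Rightarrow> bool" where
  "linked e f \<longleftrightarrow> e \<noteq> f \<and> card (e \<inter> f) = 2"

definition link_rel :: "nat set set \<Rightarrow> (nat set \<times> nat set) set" where
  "link_rel H = {(e, f). e \<in> H \<and> f \<in> H \<and> linked e f}"

definition component :: "nat set set \<Rightarrow> nat set \<Rightarrow> nat set set" where
  "component H e = {f \<in> H. (e, f) \<in> (link_rel H)\<^sup>*}"

definition clusters :: "nat set set \<Rightarrow> nat set set set" where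
  "clusters H = {C. \<exists>e\<in>H. C = component H e \<and> card C \<ge> 2}"

definition degree :: "nat set set \<Rightarrow> nat \<Rightarrow> nat" where
  "degree H v = card {e \<in> H. v \<in> e}"

definition M0star :: "nat \<Rightarrow> nat \<Rightarrow> int" where
  "M0star r n = \<lceil>ln (real n / (real r)\<^sup>2)\<rceil>"

definition M0 :: "nat \<Rightarrow> nat \<Rightarrow> int" where
  "M0 r n = M0star r n + 2"

definition M4 :: "nat \<Rightarrow> nat \<Rightarrow> int" where
  "M4 r n = \<lceil>ln (real n / (real r)\<^sup>2)\<rceil>"

definition hypergraphs_plus :: "nat \<Rightarrow> nat \<Rightarrow> nat \<Rightarrow> nat set set set" where
  "hypergraphs_plus r n m =
     {H \<in> hypergraphs r n m.
        (\<forall>e\<in>H. \<forall>f\<in>H. e \<noteq> f \<longrightarrow> card (e \<inter> f) \<le> 2) \<and>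
        (\<forall>C\<in>clusters H. card C = 2) \<and>
        (\<forall>C1\<in>clusters H. \<forall>C2\<in>clusters H. C1 \<noteq> C2 \<longrightarrow> \<Union>C1 \<inter> \<Union>C2 = {}) \<and>
        int (card (clusters H)) \<le> M4 r n \<and>
        (\<forall>v\<in>{1..n}. int (degree H v) \<le> M0 r n)}"

definition hypergraphs_pplus :: "nat \<Rightarrow> nat \<Rightarrow> nat \<Rightarrow> nat set set set" where
  "hypergraphs_pplus r n m =
     {H \<in> hypergraphs_plus r n m. \<forall>v\<in>{1..n}. int (degree H v) \<le> M0star r n}"

end

theory Submission
  imports Defs
begin

text \<open>
  If no two edges share three vertices and no edge is linked to two others, every cluster is a
  single linked pair and distinct clusters are disjoint. Hence a hypergraph outside
  \<open>H\<^sup>+\<^sup>+\<^sub>r(n,m)\<close> contains one of five configurations: a heavy pair, a linked path, two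
  disjoint linked pairs sharing a vertex, \<open>\<lceil>log(n/r^2)\<rceil> + 1\<close> pairwise disjoint linked pairs,
  or a vertex of degree above \<open>\<lceil>log(n/r^2)\<rceil>\<close>. Each configuration is a set of \<open>k\<close> edges,
  contained in at most a fraction \<open>(m/N)^k\<close> of all \<open>m\<close>-edge hypergraphs, \<open>N = C(n,r)\<close>, so
  a first-moment count bounds the proportion of hypergraphs containing each configuration by
  \<open>r^6 m^2/n^3\<close>, \<open>r^8 m^3/n^4\<close>, \<open>2 r^10 m^4/n^5\<close>, \<open>(r^4 m^2/n^2)^k/k!\<close> and
  \<open>n (r m/n)^k/k!\<close>. As \<open>r^2 m/n \<le> K\<close> for a constant \<open>K\<close>, the first three are
  \<open>O(r^6 m^2/n^3)\<close>; so are the last two, because \<open>k \<ge> log(n/r^2)\<close> is eventually large enough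
  for \<open>k! \<ge> (K e)^(2k) \<ge> K^(2k) (n/r^2)^2\<close>. The bound for \<open>H\<^sup>+\<^sub>r(n,m)\<close> follows since it
  contains \<open>H\<^sup>+\<^sup>+\<^sub>r(n,m)\<close>.
\<close>

section \<open>Counting subsets of a finite set\<close>

lemma binomial_mult_power_le:
  assumes "k \<le> N"
  shows "real (k choose t) * real N ^ t \<le> real (N choose t) * real k ^ t"
proof (cases "t \<le> k")
  case False
  then show ?thesis by (simp add: binomial_eq_0)
next
  case True
  have factor_le: "real (k - i) / real (t - i) * real N \<le> real (N - i) / real (t - i) * real k"
    if "i < t" for i
  proof -
    have "real i * real k \<le> real i * real N"
      using assms by (simp add: mult_left_mono)
    then have "real (k - i) * real N \<le> real (N - i) * real k"
      using that True assms by (simp add: of_nat_diff algebra_simps)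
    then show ?thesis by (simp add: divide_right_mono mult.commute)
  qed
  have "real (k choose t) * real N ^ t = (\<Prod>i = 0..<t. real (k - i) / real (t - i) * real N)"
    using True by (simp only: binomial_altdef_of_nat prod.distrib prod_constant card_atLeastLessThan diff_zero)
  also have "\<dots> \<le> (\<Prod>i = 0..<t. real (N - i) / real (t - i) * real k)"
    using factor_le by (intro prod_mono) auto
  also have "\<dots> = real (N choose t) * real k ^ t"
    using True assms by (simp only: binomial_altdef_of_nat prod.distrib prod_constant card_atLeastLessThan diff_zero)
  finally show ?thesis .
qed

lemma binomial_le_power_div_fact: "real (n choose k) \<le> real n ^ k / fact k"
proof -
  have "real ((n choose k) * fact k) \<le> real (n ^ k)"
    by (simp only: of_nat_le_iff binomial_fact_pow)
  then show ?thesis by (simp add: field_simps)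
qed

lemma binomial_le_power: "real (n choose k) \<le> real n ^ k"
proof -
  have "real n ^ k / fact k \<le> real n ^ k"
    by (simp add: divide_le_eq mult_le_cancel_left1)
  then show ?thesis using binomial_le_power_div_fact order_trans by blast
qed

lemma card_supersets_eq:
  assumes U: "finite U" and T: "T \<subseteq> U" and k: "card T \<le> k"
  shows "card {A. A \<subseteq> U \<and> card A = k \<and> T \<subseteq> A} = (card U - card T) choose (k - card T)"
proof -
  have fT: "finite T" using U T finite_subset by blast
  have "bij_betw (\<lambda>A. A - T) {A. A \<subseteq> U \<and> card A = k \<and> T \<subseteq> A} {B. B \<subseteq> U - T \<and> card B = k - card T}"
  proof (rule bij_betw_byWitness[where f'="\<lambda>B. B \<union> T"])
    show "(\<lambda>A. A - T) ` {A. A \<subseteq> U \<and> card A = k \<and> T \<subseteq> A} \<subseteq> {B. B \<subseteq> U - T \<and> card B = k - card T}"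
      using U fT by (auto simp: card_Diff_subset intro: finite_subset)
    show "(\<lambda>B. B \<union> T) ` {B. B \<subseteq> U - T \<and> card B = k - card T} \<subseteq> {A. A \<subseteq> U \<and> card A = k \<and> T \<subseteq> A}"
    proof clarify
      fix B assume "B \<subseteq> U - T" "card B = k - card T"
      moreover have "finite B" using \<open>B \<subseteq> U - T\<close> U finite_subset by blast
      ultimately show "B \<union> T \<subseteq> U \<and> card (B \<union> T) = k \<and> T \<subseteq> B \<union> T"
        using fT T k card_Un_disjoint[of B T] by auto
    qed
  qed auto
  then show ?thesis
    using U T fT by (simp add: bij_betw_same_card n_subsets card_Diff_subset)
qed

lemma card_supersets_le:
  assumes U: "finite U" and T: "T \<subseteq> U"
  shows "real (card {A. A \<subseteq> U \<and> card A = k \<and> T \<subseteq> A}) \<le>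
           real (card U choose k) * (real k / real (card U)) ^ card T"
proof (cases "card T \<le> k \<and> k \<le> card U")
  case False
  have "{A. A \<subseteq> U \<and> card A = k \<and> T \<subseteq> A} = {}"
    using False U T by (auto dest: card_mono[OF finite_subset[OF _ U]] card_mono[OF U])
  then show ?thesis by (simp only: card.empty of_nat_0) simp
next
  case True
  let ?N = "card U" and ?t = "card T"
  have "real (card {A. A \<subseteq> U \<and> card A = k \<and> T \<subseteq> A}) * real (?N choose ?t)
      = real (?N choose k) * real (k choose ?t)"
    using card_supersets_eq[OF U T] choose_mult[of ?t k ?N] True by (metis mult.commute of_nat_mult)
  then have "real (card {A. A \<subseteq> U \<and> card A = k \<and> T \<subseteq> A}) * real (?N choose ?t) * real ?N ^ ?t
      \<le> real (?N choose k) * (real (?N choose ?t) * real k ^ ?t)"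
    using binomial_mult_power_le[of k ?N ?t] True
    by (metis mult.assoc mult_left_mono of_nat_0_le_iff)
  moreover have "real (?N choose ?t) > 0" using True by simp
  ultimately have bound: "real (card {A. A \<subseteq> U \<and> card A = k \<and> T \<subseteq> A}) * real ?N ^ ?t
      \<le> real (?N choose k) * real k ^ ?t"
    by (simp add: mult.commute mult.left_commute)
  show ?thesis
  proof (cases "?N = 0")
    case True
    then have "?t = 0" using \<open>?t \<le> k \<and> k \<le> ?N\<close> by simp
    then show ?thesis using bound by simp
  next
    case False
    then show ?thesis using bound by (simp add: power_divide pos_le_divide_eq mult.assoc)
  qed
qed

lemma card_Sigma_le:
  assumes "finite A" "real (card A) \<le> a" "0 \<le> b"
    and "\<And>x. x \<in> A \<Longrightarrow> finite (B x) \<and> real (card (B x)) \<le> b"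
  shows "finite (Sigma A B) \<and> real (card (Sigma A B)) \<le> a * b"
proof
  show "finite (Sigma A B)" using assms(1,4) by blast
  have "real (card (Sigma A B)) = (\<Sum>x\<in>A. real (card (B x)))"
    using assms(1,4) by (simp add: card_SigmaI flip: of_nat_sum)
  also have "\<dots> \<le> real (card A) * b"
    using assms(4) by (intro sum_bounded_above) simp
  also have "\<dots> \<le> a * b"
    using assms(2,3) by (rule mult_right_mono)
  finally show "real (card (Sigma A B)) \<le> a * b" .
qed

lemma card_large_intersection_le:
  assumes U: "finite U" and e: "finite e"
  shows "real (card {f. f \<subseteq> U \<and> card f = k \<and> t \<le> card (e \<inter> f)}) \<le>
           real (card e choose t) * real (card U choose k) * (real k / real (card U)) ^ t"
proof -
  let ?I = "{T. T \<subseteq> e \<and> card T = t}"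
  let ?A = "\<lambda>T. {A. A \<subseteq> U \<and> card A = k \<and> T \<subseteq> A}"
  have "{f. f \<subseteq> U \<and> card f = k \<and> t \<le> card (e \<inter> f)} \<subseteq> (\<Union>T\<in>?I. ?A T)"
  proof
    fix f assume f: "f \<in> {f. f \<subseteq> U \<and> card f = k \<and> t \<le> card (e \<inter> f)}"
    then have "t \<le> card (e \<inter> f)" by simp
    then obtain T where "T \<subseteq> e \<inter> f" "card T = t"
      by (meson obtain_subset_with_card_n)
    then show "f \<in> (\<Union>T\<in>?I. ?A T)" using f by blast
  qed
  then have "card {f. f \<subseteq> U \<and> card f = k \<and> t \<le> card (e \<inter> f)} \<le> card (\<Union>T\<in>?I. ?A T)"
    using U e by (intro card_mono finite_UN_I) simp_all
  also have "\<dots> \<le> (\<Sum>T\<in>?I. card (?A T))"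
    using e by (intro card_UN_le) simp
  finally have "real (card {f. f \<subseteq> U \<and> card f = k \<and> t \<le> card (e \<inter> f)}) \<le> (\<Sum>T\<in>?I. real (card (?A T)))"
    by (simp flip: of_nat_sum)
  also have "\<dots> \<le> real (card ?I) * (real (card U choose k) * (real k / real (card U)) ^ t)"
  proof (rule sum_bounded_above)
    fix T assume T: "T \<in> ?I"
    show "real (card (?A T)) \<le> real (card U choose k) * (real k / real (card U)) ^ t"
    proof (cases "T \<subseteq> U")
      case True
      then show ?thesis using T card_supersets_le[OF U True, of k] by simp
    next
      case False
      then have "?A T = {}" by blast
      then show ?thesis by (simp only: card.empty of_nat_0) simp
    qed
  qed
  finally show ?thesis using e by (simp add: n_subsets mult.assoc)
qed

section \<open>The first-moment bound\<close>

definition edges :: "nat \<Rightarrow> nat \<Rightarrow> nat set set" where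
  "edges r n = {e. e \<subseteq> {1..n} \<and> card e = r}"

lemma hypergraphs_eq: "hypergraphs r n m = {H. H \<subseteq> edges r n \<and> card H = m}"
  unfolding hypergraphs_def edges_def by simp

lemma finite_edges [simp]: "finite (edges r n)"
  unfolding edges_def by (rule finite_subset[of _ "Pow {1..n}"]) auto

lemma card_edges [simp]: "card (edges r n) = n choose r"
  unfolding edges_def using n_subsets[of "{1..n}" r] by simp

lemma finite_card_edge: "e \<in> edges r n \<Longrightarrow> finite e \<and> card e = r"
  unfolding edges_def by (auto intro: finite_subset)

lemma finite_hypergraphs [simp]: "finite (hypergraphs r n m)"
  unfolding hypergraphs_eq by (rule finite_subset[of _ "Pow (edges r n)"]) auto

lemma card_hypergraphs: "card (hypergraphs r n m) = (n choose r) choose m"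
  unfolding hypergraphs_eq by (simp add: n_subsets)

lemma card_hypergraphs_containing_le:
  assumes Bad: "Bad \<subseteq> {H \<in> hypergraphs r n m. \<exists>p\<in>T. S p \<subseteq> H}"
    and T: "finite T" "\<And>p. p \<in> T \<Longrightarrow> S p \<subseteq> edges r n \<and> card (S p) = k"
    and card_T: "real (card T) \<le> real (n choose r) ^ k * c"
    and rn: "r \<le> n"
  shows "real (card Bad) \<le> real (card (hypergraphs r n m)) * (c * real m ^ k)"
proof -
  let ?N = "real (n choose r)" and ?Hy = "real (card (hypergraphs r n m))"
  let ?A = "\<lambda>p. {H. H \<subseteq> edges r n \<and> card H = m \<and> S p \<subseteq> H}"
  have "Bad \<subseteq> (\<Union>p\<in>T. ?A p)"
    using Bad unfolding hypergraphs_eq by blast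
  moreover have "finite (?A p)" for p
    by (rule finite_subset[of _ "Pow (edges r n)"]) auto
  ultimately have "card Bad \<le> card (\<Union>p\<in>T. ?A p)"
    using T(1) by (intro card_mono finite_UN_I)
  also have "\<dots> \<le> (\<Sum>p\<in>T. card (?A p))"
    using T(1) by (rule card_UN_le)
  finally have "real (card Bad) \<le> (\<Sum>p\<in>T. real (card (?A p)))"
    by (simp flip: of_nat_sum)
  also have "\<dots> \<le> real (card T) * (?Hy * (real m / ?N) ^ k)"
  proof (rule sum_bounded_above)
    fix p assume "p \<in> T"
    then show "real (card (?A p)) \<le> ?Hy * (real m / ?N) ^ k"
      using card_supersets_le[of "edges r n" "S p" m] T(2) by (simp add: card_hypergraphs)
  qed
  also have "\<dots> \<le> ?N ^ k * c * (?Hy * (real m / ?N) ^ k)"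
    using card_T by (intro mult_right_mono) simp_all
  also have "\<dots> = ?Hy * (c * real m ^ k)"
    using rn by (simp add: power_divide)
  finally show ?thesis .
qed

definition overlapping :: "nat \<Rightarrow> nat \<Rightarrow> nat set \<Rightarrow> nat \<Rightarrow> nat set set" where
  "overlapping r n e t = {f \<in> edges r n. t \<le> card (e \<inter> f)}"

lemma finite_overlapping [simp]: "finite (overlapping r n e t)"
  unfolding overlapping_def by simp

lemma card_overlapping_le:
  assumes "finite e" "card e \<le> c"
  shows "real (card (overlapping r n e t - X)) \<le> real c ^ t * real (n choose r) * (real r / real n) ^ t"
proof -
  have "real (card (overlapping r n e t - X)) \<le> real (card (overlapping r n e t))"
    by (simp add: card_mono)
  also have "\<dots> \<le> real (card e choose t) * real (n choose r) * (real r / real n) ^ t"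
    using card_large_intersection_le[of "{1..n}" e r t] assms(1)
    by (simp add: overlapping_def edges_def conj_assoc)
  also have "\<dots> \<le> real c ^ t * real (n choose r) * (real r / real n) ^ t"
  proof (intro mult_right_mono)
    show "real (card e choose t) \<le> real c ^ t"
      using binomial_le_power[of "card e" t] power_mono[of "real (card e)" "real c" t] assms(2)
      by linarith
  qed simp_all
  finally show ?thesis .
qed

section \<open>Forbidden configurations\<close>

definition heavy_pair :: "nat set set \<Rightarrow> bool" where
  "heavy_pair H \<longleftrightarrow> (\<exists>e\<in>H. \<exists>f\<in>H. e \<noteq> f \<and> 3 \<le> card (e \<inter> f))"

definition linked_path :: "nat set set \<Rightarrow> bool" where
  "linked_path H \<longleftrightarrow> (\<exists>e\<in>H. \<exists>f\<in>H. \<exists>g\<in>H. linked e f \<and> linked f g \<and> e \<noteq> g)"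

definition linked_pairs :: "nat set set \<Rightarrow> nat set set set" where
  "linked_pairs H = {{e, f} |e f. e \<in> H \<and> f \<in> H \<and> linked e f}"

definition touching_linked_pairs :: "nat set set \<Rightarrow> bool" where
  "touching_linked_pairs H \<longleftrightarrow>
     (\<exists>P\<in>linked_pairs H. \<exists>Q\<in>linked_pairs H. P \<inter> Q = {} \<and> \<Union>P \<inter> \<Union>Q \<noteq> {})"

definition disjoint_linked_pairs :: "nat \<Rightarrow> nat set set \<Rightarrow> bool" where
  "disjoint_linked_pairs k H \<longleftrightarrow> (\<exists>A\<subseteq>linked_pairs H. card A = k \<and> pairwise disjnt A)"

lemma linked_sym: "linked e f \<Longrightarrow> linked f e"
  unfolding linked_def by (auto simp: Int_commute)

lemma linked_in_overlapping: "f \<in> edges r n \<Longrightarrow> linked e f \<Longrightarrow> f \<in> overlapping r n e 2 - {e}"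
  unfolding overlapping_def linked_def by auto

lemma edge_if_overlapping: "f \<in> overlapping r n e t \<Longrightarrow> f \<in> edges r n"
  unfolding overlapping_def by simp

lemma card_overlapping_edge_le:
  assumes "e \<in> edges r n"
  shows "finite (overlapping r n e t - X) \<and>
    real (card (overlapping r n e t - X)) \<le> real r ^ t * real (n choose r) * (real r / real n) ^ t"
  using assms by (simp add: card_overlapping_le finite_card_edge)

lemma card_linked_pair: "P \<in> linked_pairs H \<Longrightarrow> card P = 2"
  unfolding linked_pairs_def linked_def by (elim CollectE exE conjE) simp

lemma linked_pairs_mono: "H \<subseteq> H' \<Longrightarrow> linked_pairs H \<subseteq> linked_pairs H'"
  unfolding linked_pairs_def by blast

lemma Union_linked_pairs_subset: "\<Union>(linked_pairs H) \<subseteq> H"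
  unfolding linked_pairs_def by blast

lemma linked_pairs_subset_image:
  "linked_pairs (edges r n) \<subseteq> (\<lambda>(e, f). {e, f}) ` (SIGMA e:edges r n. overlapping r n e 2 - {e})"
  unfolding linked_pairs_def using linked_in_overlapping by fastforce

lemma card_heavy_pair_le:
  assumes "r \<le> n"
  shows "real (card {H \<in> hypergraphs r n m. heavy_pair H})
           \<le> real (card (hypergraphs r n m)) * (real r ^ 6 * real m ^ 2 / real n ^ 3)"
proof -
  let ?N = "real (n choose r)" and ?x = "real r / real n"
  let ?T = "SIGMA e:edges r n. overlapping r n e 3 - {e}"
  have "finite ?T \<and> real (card ?T) \<le> ?N * (real r ^ 3 * ?N * ?x ^ 3)"
    by (rule card_Sigma_le) (simp_all add: card_overlapping_edge_le)
  then have card_T: "real (card ?T) \<le> ?N ^ 2 * (real r ^ 3 * ?x ^ 3)"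
    by (simp add: power2_eq_square mult_ac)
  have "{H \<in> hypergraphs r n m. heavy_pair H}
      \<subseteq> {H \<in> hypergraphs r n m. \<exists>p\<in>?T. (\<lambda>(e, f). {e, f}) p \<subseteq> H}"
    unfolding heavy_pair_def hypergraphs_eq overlapping_def by fastforce
  then have "real (card {H \<in> hypergraphs r n m. heavy_pair H})
      \<le> real (card (hypergraphs r n m)) * (real r ^ 3 * ?x ^ 3 * real m ^ 2)"
    by (rule card_hypergraphs_containing_le[OF _ _ _ card_T assms]) (auto simp: overlapping_def card_insert_if)
  also have "\<dots> = real (card (hypergraphs r n m)) * (real r ^ 6 * real m ^ 2 / real n ^ 3)"
    by (simp add: power_divide)
  finally show ?thesis .
qed

lemma card_linked_path_le:
  assumes "r \<le> n"
  shows "real (card {H \<in> hypergraphs r n m. linked_path H})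
           \<le> real (card (hypergraphs r n m)) * (real r ^ 8 * real m ^ 3 / real n ^ 4)"
proof -
  let ?N = "real (n choose r)" and ?x = "real r / real n"
  let ?q = "real r ^ 2 * ?N * ?x ^ 2"
  let ?T = "SIGMA e:edges r n. SIGMA f:overlapping r n e 2 - {e}. overlapping r n f 2 - {e, f}"
  have "finite ?T \<and> real (card ?T) \<le> ?N * (?q * ?q)"
  proof (rule card_Sigma_le)
    fix e assume e: "e \<in> edges r n"
    show "finite (SIGMA f:overlapping r n e 2 - {e}. overlapping r n f 2 - {e, f}) \<and>
      real (card (SIGMA f:overlapping r n e 2 - {e}. overlapping r n f 2 - {e, f})) \<le> ?q * ?q"
    proof (rule card_Sigma_le)
      fix f assume "f \<in> overlapping r n e 2 - {e}"
      then show "finite (overlapping r n f 2 - {e, f}) \<and> real (card (overlapping r n f 2 - {e, f})) \<le> ?q"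
        by (intro card_overlapping_edge_le) (blast dest: edge_if_overlapping)
    qed (use card_overlapping_edge_le[OF e, of 2 "{e}"] in simp_all)
  qed simp_all
  then have "real (card ?T) \<le> ?N * (?q * ?q)" ..
  also have "\<dots> = ?N ^ 3 * (real r ^ 4 * ?x ^ 4)"
    by (simp add: power_divide field_simps eval_nat_numeral)
  finally have card_T: "real (card ?T) \<le> ?N ^ 3 * (real r ^ 4 * ?x ^ 4)" .
  have "{H \<in> hypergraphs r n m. linked_path H}
      \<subseteq> {H \<in> hypergraphs r n m. \<exists>p\<in>?T. (\<lambda>(e, f, g). {e, f, g}) p \<subseteq> H}"
  proof clarify
    fix H assume H: "H \<in> hypergraphs r n m" "linked_path H"
    then obtain e f g where efg: "e \<in> H" "f \<in> H" "g \<in> H" "linked e f" "linked f g" "e \<noteq> g"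
      unfolding linked_path_def by blast
    have HE: "H \<subseteq> edges r n" using H(1) unfolding hypergraphs_eq by blast
    have "f \<in> overlapping r n e 2 - {e}"
      using linked_in_overlapping[OF _ efg(4)] HE efg(2) by blast
    moreover have "g \<in> overlapping r n f 2 - {e, f}"
      using linked_in_overlapping[OF _ efg(5)] HE efg(3,6) by blast
    ultimately have "(e, f, g) \<in> ?T" using HE efg(1) by blast
    moreover have "{e, f, g} \<subseteq> H" using efg by simp
    ultimately show "\<exists>p\<in>?T. (\<lambda>(e, f, g). {e, f, g}) p \<subseteq> H"
      by (intro bexI[of _ "(e, f, g)"]) simp_all
  qed
  then have "real (card {H \<in> hypergraphs r n m. linked_path H})
      \<le> real (card (hypergraphs r n m)) * (real r ^ 4 * ?x ^ 4 * real m ^ 3)"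
    by (rule card_hypergraphs_containing_le[OF _ _ _ card_T assms]) (auto simp: overlapping_def card_insert_if)
  also have "\<dots> = real (card (hypergraphs r n m)) * (real r ^ 8 * real m ^ 3 / real n ^ 4)"
    by (simp add: power_divide)
  finally show ?thesis .
qed

lemma touching_linked_pairsE:
  assumes "touching_linked_pairs H"
  obtains a b c d where "a \<in> H" "b \<in> H" "c \<in> H" "d \<in> H" "linked a b" "linked c d"
    "{a, b} \<inter> {c, d} = {}" "(a \<union> b) \<inter> c \<noteq> {}"
proof -
  obtain P Q where PQ: "P \<in> linked_pairs H" "Q \<in> linked_pairs H" "P \<inter> Q = {}" "\<Union>P \<inter> \<Union>Q \<noteq> {}"
    using assms unfolding touching_linked_pairs_def by blast
  obtain a b where ab: "P = {a, b}" "a \<in> H" "b \<in> H" "linked a b"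
    using PQ(1) unfolding linked_pairs_def by blast
  obtain c d where cd: "Q = {c, d}" "c \<in> H" "d \<in> H" "linked c d"
    using PQ(2) unfolding linked_pairs_def by blast
  have disj: "{a, b} \<inter> {c, d} = {}" using PQ(3) ab(1) cd(1) by simp
  show thesis
  proof (cases "(a \<union> b) \<inter> c = {}")
    case True
    then have "(a \<union> b) \<inter> d \<noteq> {}" using PQ(4) ab(1) cd(1) by auto
    show thesis
      by (rule that[of a b d c]) (use ab cd disj linked_sym \<open>(a \<union> b) \<inter> d \<noteq> {}\<close> in \<open>simp_all add: insert_commute\<close>)
  next
    case False
    show thesis by (rule that[of a b c d]) (use ab cd disj False in simp_all)
  qed
qed

lemma card_touching_tuples_le:
  "real (card (SIGMA a:edges r n. SIGMA b:overlapping r n a 2 - {a}.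
      SIGMA c:overlapping r n (a \<union> b) 1 - {a, b}. overlapping r n c 2 - {a, b, c}))
    \<le> real (n choose r) ^ 4 * (2 * real r ^ 5 * (real r / real n) ^ 5)"
proof -
  let ?N = "real (n choose r)" and ?x = "real r / real n"
  let ?q = "real r ^ 2 * ?N * ?x ^ 2" and ?q1 = "real (2 * r) ^ 1 * ?N * ?x ^ 1"
  let ?T = "SIGMA a:edges r n. SIGMA b:overlapping r n a 2 - {a}.
              SIGMA c:overlapping r n (a \<union> b) 1 - {a, b}. overlapping r n c 2 - {a, b, c}"
  have q1: "finite (overlapping r n (a \<union> b) 1 - {a, b}) \<and>
      real (card (overlapping r n (a \<union> b) 1 - {a, b})) \<le> ?q1"
    if "a \<in> edges r n" "b \<in> edges r n" for a b
  proof
    have "finite (a \<union> b)" "card (a \<union> b) \<le> 2 * r"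
      using that finite_card_edge card_Un_le[of a b] by auto
    then show "real (card (overlapping r n (a \<union> b) 1 - {a, b})) \<le> ?q1"
      by (rule card_overlapping_le)
  qed simp
  have inner: "finite (SIGMA c:overlapping r n (a \<union> b) 1 - {a, b}. overlapping r n c 2 - {a, b, c}) \<and>
      real (card (SIGMA c:overlapping r n (a \<union> b) 1 - {a, b}. overlapping r n c 2 - {a, b, c})) \<le> ?q1 * ?q"
    if "a \<in> edges r n" "b \<in> edges r n" for a b
  proof (rule card_Sigma_le)
    fix c assume "c \<in> overlapping r n (a \<union> b) 1 - {a, b}"
    then show "finite (overlapping r n c 2 - {a, b, c}) \<and> real (card (overlapping r n c 2 - {a, b, c})) \<le> ?q"
      by (intro card_overlapping_edge_le) (blast dest: edge_if_overlapping)
  qed (use q1[OF that] in simp_all)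
  have "finite ?T \<and> real (card ?T) \<le> ?N * (?q * (?q1 * ?q))"
  proof (rule card_Sigma_le)
    fix a assume a: "a \<in> edges r n"
    show "finite (SIGMA b:overlapping r n a 2 - {a}. SIGMA c:overlapping r n (a \<union> b) 1 - {a, b}.
        overlapping r n c 2 - {a, b, c}) \<and>
      real (card (SIGMA b:overlapping r n a 2 - {a}. SIGMA c:overlapping r n (a \<union> b) 1 - {a, b}.
        overlapping r n c 2 - {a, b, c})) \<le> ?q * (?q1 * ?q)"
    proof (rule card_Sigma_le)
      fix b assume "b \<in> overlapping r n a 2 - {a}"
      then show "finite (SIGMA c:overlapping r n (a \<union> b) 1 - {a, b}. overlapping r n c 2 - {a, b, c}) \<and>
        real (card (SIGMA c:overlapping r n (a \<union> b) 1 - {a, b}. overlapping r n c 2 - {a, b, c})) \<le> ?q1 * ?q"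
        by (intro inner a) (blast dest: edge_if_overlapping)
    qed (use card_overlapping_edge_le[OF a, of 2 "{a}"] in simp_all)
  qed simp_all
  then have "real (card ?T) \<le> ?N * (?q * (?q1 * ?q))" ..
  also have "\<dots> = ?N ^ 4 * (2 * real r ^ 5 * ?x ^ 5)"
    by (simp add: power_divide field_simps eval_nat_numeral)
  finally show ?thesis .
qed

lemma card_touching_linked_pairs_le:
  assumes "r \<le> n"
  shows "real (card {H \<in> hypergraphs r n m. touching_linked_pairs H})
           \<le> real (card (hypergraphs r n m)) * (2 * real r ^ 10 * real m ^ 4 / real n ^ 5)"
proof -
  let ?x = "real r / real n"
  let ?T = "SIGMA a:edges r n. SIGMA b:overlapping r n a 2 - {a}.
              SIGMA c:overlapping r n (a \<union> b) 1 - {a, b}. overlapping r n c 2 - {a, b, c}"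
  note card_T = card_touching_tuples_le[of r n]
  have "{H \<in> hypergraphs r n m. touching_linked_pairs H}
      \<subseteq> {H \<in> hypergraphs r n m. \<exists>p\<in>?T. (\<lambda>(a, b, c, d). {a, b, c, d}) p \<subseteq> H}"
  proof clarify
    fix H assume H: "H \<in> hypergraphs r n m" "touching_linked_pairs H"
    obtain a b c d where abcd: "a \<in> H" "b \<in> H" "c \<in> H" "d \<in> H" "linked a b" "linked c d"
      "{a, b} \<inter> {c, d} = {}" "(a \<union> b) \<inter> c \<noteq> {}"
      using H(2) by (rule touching_linked_pairsE)
    have HE: "H \<subseteq> edges r n" using H(1) unfolding hypergraphs_eq by blast
    have "finite (a \<union> b)" using HE abcd(1,2) finite_card_edge by blast
    then have "1 \<le> card ((a \<union> b) \<inter> c)"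
      using abcd(8) by (simp add: Suc_le_eq card_gt_0_iff)
    then have "c \<in> overlapping r n (a \<union> b) 1 - {a, b}"
      using HE abcd(3,7) unfolding overlapping_def by blast
    moreover have "b \<in> overlapping r n a 2 - {a}"
      using linked_in_overlapping[OF _ abcd(5)] HE abcd(2) by blast
    moreover have "d \<in> overlapping r n c 2 - {a, b, c}"
      using linked_in_overlapping[OF _ abcd(6)] HE abcd(4,7) by blast
    ultimately have "(a, b, c, d) \<in> ?T" using HE abcd(1) by blast
    moreover have "{a, b, c, d} \<subseteq> H" using abcd by simp
    ultimately show "\<exists>p\<in>?T. (\<lambda>(a, b, c, d). {a, b, c, d}) p \<subseteq> H"
      by (intro bexI[of _ "(a, b, c, d)"]) simp_all
  qed
  then have "real (card {H \<in> hypergraphs r n m. touching_linked_pairs H})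
      \<le> real (card (hypergraphs r n m)) * (2 * real r ^ 5 * ?x ^ 5 * real m ^ 4)"
    by (rule card_hypergraphs_containing_le[OF _ _ _ card_T assms]) (auto simp: overlapping_def card_insert_if)
  also have "\<dots> = real (card (hypergraphs r n m)) * (2 * real r ^ 10 * real m ^ 4 / real n ^ 5)"
    by (simp add: power_divide)
  finally show ?thesis .
qed

lemma finite_linked_pairs: "finite H \<Longrightarrow> finite (linked_pairs H)"
  unfolding linked_pairs_def by (rule finite_subset[of _ "Pow H"]) auto

lemma card_linked_pairs_edges_le:
  "real (card (linked_pairs (edges r n))) \<le> real (n choose r) ^ 2 * (real r ^ 2 * (real r / real n) ^ 2)"
proof -
  let ?T = "SIGMA e:edges r n. overlapping r n e 2 - {e}"
  have "card (linked_pairs (edges r n)) \<le> card ((\<lambda>(e, f). {e, f}) ` ?T)"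
    by (intro card_mono linked_pairs_subset_image) simp
  also have "\<dots> \<le> card ?T"
    by (rule card_image_le) simp
  finally have "real (card (linked_pairs (edges r n))) \<le> real (card ?T)"
    by (simp only: of_nat_le_iff)
  also have "\<dots> \<le> real (n choose r) * (real r ^ 2 * real (n choose r) * (real r / real n) ^ 2)"
    by (rule conjunct2[OF card_Sigma_le]) (simp_all add: card_overlapping_edge_le)
  also have "\<dots> = real (n choose r) ^ 2 * (real r ^ 2 * (real r / real n) ^ 2)"
    by (simp add: power2_eq_square)
  finally show ?thesis .
qed

lemma card_disjoint_linked_pairs_le:
  assumes "r \<le> n"
  shows "real (card {H \<in> hypergraphs r n m. disjoint_linked_pairs k H})
           \<le> real (card (hypergraphs r n m)) * ((real r ^ 4 * real m ^ 2 / real n ^ 2) ^ k / fact k)"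
proof -
  let ?N = "real (n choose r)" and ?x = "real r / real n"
  let ?LP = "linked_pairs (edges r n)"
  let ?T = "{A. A \<subseteq> ?LP \<and> card A = k \<and> pairwise disjnt A}"
  have fin_LP: "finite ?LP" by (simp add: finite_linked_pairs)
  have "card ?T \<le> card {A. A \<subseteq> ?LP \<and> card A = k}"
    using fin_LP by (intro card_mono) auto
  then have "real (card ?T) \<le> real (card ?LP choose k)"
    using fin_LP by (simp add: n_subsets)
  also have "\<dots> \<le> real (card ?LP) ^ k / fact k"
    by (rule binomial_le_power_div_fact)
  also have "\<dots> \<le> (?N ^ 2 * (real r ^ 2 * ?x ^ 2)) ^ k / fact k"
    by (intro divide_right_mono power_mono card_linked_pairs_edges_le) simp_all
  also have "\<dots> = ?N ^ (2 * k) * ((real r ^ 2 * ?x ^ 2) ^ k / fact k)"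
    by (simp add: power_mult_distrib power_mult)
  finally have card_T: "real (card ?T) \<le> ?N ^ (2 * k) * ((real r ^ 2 * ?x ^ 2) ^ k / fact k)" .
  have "{H \<in> hypergraphs r n m. disjoint_linked_pairs k H} \<subseteq> {H \<in> hypergraphs r n m. \<exists>A\<in>?T. \<Union>A \<subseteq> H}"
  proof clarify
    fix H assume "H \<in> hypergraphs r n m" "disjoint_linked_pairs k H"
    then obtain A where A: "A \<subseteq> linked_pairs H" "card A = k" "pairwise disjnt A" "H \<subseteq> edges r n"
      unfolding disjoint_linked_pairs_def hypergraphs_eq by blast
    then have "A \<in> ?T" using linked_pairs_mono[OF A(4)] by blast
    moreover have "\<Union>A \<subseteq> H" using A(1) Union_linked_pairs_subset by blast
    ultimately show "\<exists>A\<in>?T. \<Union>A \<subseteq> H" by blast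
  qed
  moreover have "\<Union>A \<subseteq> edges r n \<and> card (\<Union>A) = 2 * k" if "A \<in> ?T" for A
  proof
    show "\<Union>A \<subseteq> edges r n" using that Union_linked_pairs_subset by blast
    have card_P: "card P = 2" if "P \<in> A" for P
      using \<open>A \<in> ?T\<close> that card_linked_pair by blast
    then have "card (\<Union>A) = sum card A"
      using \<open>A \<in> ?T\<close> by (intro card_Union_disjoint) (auto intro: card_ge_0_finite)
    also have "\<dots> = 2 * k"
      using \<open>A \<in> ?T\<close> card_P by simp
    finally show "card (\<Union>A) = 2 * k" .
  qed
  ultimately have "real (card {H \<in> hypergraphs r n m. disjoint_linked_pairs k H})
      \<le> real (card (hypergraphs r n m)) * ((real r ^ 2 * ?x ^ 2) ^ k / fact k * real m ^ (2 * k))"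
    using fin_LP by (intro card_hypergraphs_containing_le[where S=Union, OF _ _ _ card_T assms]) auto
  also have "\<dots> = real (card (hypergraphs r n m)) * ((real r ^ 4 * real m ^ 2 / real n ^ 2) ^ k / fact k)"
    by (simp add: power_mult power_divide power_mult_distrib flip: power_add)
  finally show ?thesis .
qed

lemma card_high_degree_le:
  assumes "r \<le> n"
  shows "real (card {H \<in> hypergraphs r n m. \<exists>v\<in>{1..n}. k \<le> degree H v})
           \<le> real (card (hypergraphs r n m)) * (real n * (real r * real m / real n) ^ k / fact k)"
proof -
  let ?N = "real (n choose r)" and ?x = "real r / real n"
  let ?S = "\<lambda>v. {S. S \<subseteq> overlapping r n {v} 1 \<and> card S = k}"
  let ?T = "\<Union>v\<in>{1..n}. ?S v"
  have "card ?T \<le> (\<Sum>v\<in>{1..n}. card (?S v))"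
    by (rule card_UN_le) simp
  then have "real (card ?T) \<le> (\<Sum>v\<in>{1..n}. real (card (overlapping r n {v} 1) choose k))"
    by (simp add: n_subsets flip: of_nat_sum)
  also have "\<dots> \<le> real (card {1..n}) * ((?N * ?x) ^ k / fact k)"
  proof (rule sum_bounded_above)
    fix v
    have "real (card (overlapping r n {v} 1) choose k) \<le> real (card (overlapping r n {v} 1)) ^ k / fact k"
      by (rule binomial_le_power_div_fact)
    also have "\<dots> \<le> (?N * ?x) ^ k / fact k"
      using card_overlapping_le[of "{v}" 1 r n 1 "{}"]
      by (intro divide_right_mono power_mono) simp_all
    finally show "real (card (overlapping r n {v} 1) choose k) \<le> (?N * ?x) ^ k / fact k" .
  qed
  also have "\<dots> = ?N ^ k * (real n * ?x ^ k / fact k)"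
    by (simp add: power_mult_distrib flip: times_divide_eq_right)
  finally have card_T: "real (card ?T) \<le> ?N ^ k * (real n * ?x ^ k / fact k)" .
  have "{H \<in> hypergraphs r n m. \<exists>v\<in>{1..n}. k \<le> degree H v} \<subseteq> {H \<in> hypergraphs r n m. \<exists>S\<in>?T. S \<subseteq> H}"
  proof clarify
    fix H v assume H: "H \<in> hypergraphs r n m" and v: "v \<in> {1..n}" "k \<le> degree H v"
    then obtain S where S: "S \<subseteq> {e \<in> H. v \<in> e}" "card S = k"
      unfolding degree_def by (meson obtain_subset_with_card_n)
    have "S \<subseteq> overlapping r n {v} 1"
    proof
      fix e assume "e \<in> S"
      then have "e \<in> edges r n" "v \<in> e" using S(1) H unfolding hypergraphs_eq by auto
      then show "e \<in> overlapping r n {v} 1"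
        unfolding overlapping_def using finite_card_edge by auto
    qed
    then show "\<exists>S\<in>?T. S \<subseteq> H" using v(1) S by blast
  qed
  then have "real (card {H \<in> hypergraphs r n m. \<exists>v\<in>{1..n}. k \<le> degree H v})
      \<le> real (card (hypergraphs r n m)) * (real n * ?x ^ k / fact k * real m ^ k)"
    by (rule card_hypergraphs_containing_le[where S="\<lambda>S. S", OF _ _ _ card_T assms])
      (auto dest: edge_if_overlapping)
  also have "\<dots> = real (card (hypergraphs r n m)) * (real n * (real r * real m / real n) ^ k / fact k)"
    by (simp add: power_divide power_mult_distrib)
  finally show ?thesis .
qed

section \<open>Clusters\<close>

lemma sym_link_rel: "sym (link_rel H)"
  unfolding sym_def link_rel_def using linked_sym by blast

lemma component_eq:
  assumes "f \<in> component H e"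
  shows "component H f = component H e"
proof -
  have ef: "(e, f) \<in> (link_rel H)\<^sup>*" using assms unfolding component_def by simp
  then have fe: "(f, e) \<in> (link_rel H)\<^sup>*"
    using sym_rtrancl[OF sym_link_rel] unfolding sym_def by blast
  show ?thesis
    unfolding component_def using rtrancl_trans[OF ef] rtrancl_trans[OF fe] by blast
qed

lemma clusters_disjoint:
  assumes "C1 \<in> clusters H" "C2 \<in> clusters H" "C1 \<noteq> C2"
  shows "C1 \<inter> C2 = {}"
  using assms component_eq unfolding clusters_def by blast

lemma component_in_linked_pairs:
  assumes no_path: "\<not> linked_path H" and e: "e \<in> H" and two: "2 \<le> card (component H e)"
  shows "component H e \<in> linked_pairs H"
proof -
  obtain f where f: "f \<in> component H e" "f \<noteq> e"
  proof -
    have "\<not> component H e \<subseteq> {e}"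
      using two card_mono[of "{e}" "component H e"] by auto
    then show ?thesis using that by blast
  qed
  then obtain g where g: "(e, g) \<in> link_rel H"
    unfolding component_def by (metis (no_types, lifting) converse_rtranclE mem_Collect_eq)
  then have g': "g \<in> H" "linked e g" unfolding link_rel_def by auto
  have "y \<in> {e, g}" if "(e, y) \<in> (link_rel H)\<^sup>*" for y
    using that
  proof (induction rule: rtrancl_induct)
    case (step y z)
    then have "y \<in> H" "z \<in> H" "linked y z" unfolding link_rel_def by auto
    then show ?case
      using step.IH no_path e g' linked_sym unfolding linked_path_def by blast
  qed simp
  then have "component H e = {e, g}"
    using e g g' unfolding component_def by auto
  then show ?thesis
    using e g' unfolding linked_pairs_def by blast
qed

lemma clusters_subset_linked_pairs: "\<not> linked_path H \<Longrightarrow> clusters H \<subseteq> linked_pairs H"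
  unfolding clusters_def using component_in_linked_pairs by blast

lemma hypergraphs_pplus_if_no_configuration:
  assumes H: "H \<in> hypergraphs r n m"
    and "\<not> heavy_pair H" and no_path: "\<not> linked_path H" and "\<not> touching_linked_pairs H"
    and no_pairs: "\<not> disjoint_linked_pairs (nat (M4 r n) + 1) H" and "0 \<le> M4 r n"
    and degree: "\<forall>v\<in>{1..n}. int (degree H v) \<le> M0star r n"
  shows "H \<in> hypergraphs_pplus r n m"
proof -
  have cl: "clusters H \<subseteq> linked_pairs H"
    using no_path by (rule clusters_subset_linked_pairs)
  have "pairwise disjnt (clusters H)"
    using clusters_disjoint unfolding pairwise_def disjnt_def by blast
  have clusters_card: "int (card (clusters H)) \<le> M4 r n"
  proof (rule ccontr)
    assume "\<not> int (card (clusters H)) \<le> M4 r n"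
    then have "nat (M4 r n) + 1 \<le> card (clusters H)"
      using \<open>0 \<le> M4 r n\<close> by (simp add: nat_less_iff Suc_le_eq)
    then obtain A where A: "A \<subseteq> clusters H" "card A = nat (M4 r n) + 1"
      by (meson obtain_subset_with_card_n)
    have "A \<subseteq> linked_pairs H" using A(1) cl by blast
    moreover have "pairwise disjnt A"
      using pairwise_subset[OF \<open>pairwise disjnt (clusters H)\<close> A(1)] .
    ultimately have "disjoint_linked_pairs (nat (M4 r n) + 1) H"
      unfolding disjoint_linked_pairs_def using A(2) by blast
    then show False using no_pairs by contradiction
  qed
  have cluster_card: "\<forall>C\<in>clusters H. card C = 2"
    using cl card_linked_pair by blast
  have clusters_vertex_disjoint:
    "\<forall>C1\<in>clusters H. \<forall>C2\<in>clusters H. C1 \<noteq> C2 \<longrightarrow> \<Union>C1 \<inter> \<Union>C2 = {}"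
  proof (intro ballI impI)
    fix C1 C2 assume C: "C1 \<in> clusters H" "C2 \<in> clusters H" "C1 \<noteq> C2"
    then have "C1 \<in> linked_pairs H" "C2 \<in> linked_pairs H" "C1 \<inter> C2 = {}"
      using cl clusters_disjoint by blast+
    then show "\<Union>C1 \<inter> \<Union>C2 = {}"
      using \<open>\<not> touching_linked_pairs H\<close> unfolding touching_linked_pairs_def by blast
  qed
  have intersections: "\<forall>e\<in>H. \<forall>f\<in>H. e \<noteq> f \<longrightarrow> card (e \<inter> f) \<le> 2"
  proof (intro ballI impI)
    fix e f assume "e \<in> H" "f \<in> H" "e \<noteq> f"
    then have "\<not> 3 \<le> card (e \<inter> f)"
      using \<open>\<not> heavy_pair H\<close> unfolding heavy_pair_def by blast
    then show "card (e \<inter> f) \<le> 2" by simp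
  qed
  have "\<forall>v\<in>{1..n}. int (degree H v) \<le> M0 r n"
    using degree unfolding M0_def by force
  then show ?thesis
    unfolding hypergraphs_pplus_def hypergraphs_plus_def mem_Collect_eq
    using H degree clusters_card cluster_card clusters_vertex_disjoint intersections
    by (intro conjI)
qed

section \<open>The error terms\<close>

lemma power_mult_power_le_fact:
  fixes t u K :: real
  assumes "0 < t" "ln t \<le> real k" "i \<le> 2" "0 \<le> u" "u \<le> K" "1 \<le> K" "j \<le> 2 * k"
    and fact: "(K\<^sup>2 * exp 2) ^ k \<le> fact k"
  shows "t ^ i * u ^ j \<le> fact k"
proof -
  have "t \<le> exp (real k)"
    using assms(1,2) by (metis exp_le_cancel_iff exp_ln)
  then have "t ^ i \<le> exp (real k) ^ i"
    using assms(1) by (intro power_mono) simp_all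
  also have "\<dots> \<le> exp (real k) ^ 2"
    using assms(3) by (intro power_increasing) simp_all
  also have "\<dots> = exp 2 ^ k"
    by (simp flip: exp_of_nat_mult exp_of_nat2_mult)
  finally have t: "t ^ i \<le> exp 2 ^ k" .
  have "u ^ j \<le> K ^ j"
    using assms(5,4) by (rule power_mono)
  also have "\<dots> \<le> K ^ (2 * k)"
    using assms(7,6) by (rule power_increasing)
  finally have u: "u ^ j \<le> (K\<^sup>2) ^ k"
    by (simp add: power_mult)
  have "t ^ i * u ^ j \<le> exp 2 ^ k * (K\<^sup>2) ^ k"
    using t u assms(1,4) by (intro mult_mono) simp_all
  also have "\<dots> = (K\<^sup>2 * exp 2) ^ k"
    by (simp add: power_mult_distrib)
  finally show ?thesis using fact by linarith
qed

lemma first_moment_terms_le: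
  fixes r n m K :: real and k :: nat
  defines "t \<equiv> n / r\<^sup>2"
  assumes r: "1 \<le> r" and n: "0 < n" and m: "0 \<le> m" "m \<le> K * t" and K: "1 \<le> K"
    and k: "2 \<le> k" "ln t \<le> real k" and fact: "(K\<^sup>2 * exp 2) ^ k \<le> fact k"
  shows "r ^ 8 * m ^ 3 / n ^ 4 \<le> K * (r ^ 6 * m\<^sup>2 / n ^ 3)"
    and "2 * r ^ 10 * m ^ 4 / n ^ 5 \<le> 2 * K\<^sup>2 * (r ^ 6 * m\<^sup>2 / n ^ 3)"
    and "(r ^ 4 * m\<^sup>2 / n\<^sup>2) ^ k / fact k \<le> r ^ 6 * m\<^sup>2 / n ^ 3"
    and "n * (r * m / n) ^ k / fact k \<le> r ^ 6 * m\<^sup>2 / n ^ 3"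
proof -
  define u where "u = r\<^sup>2 * m / n"
  have t: "0 < t" unfolding t_def using r n by simp
  have u: "0 \<le> u" "u \<le> K"
    using r n m unfolding u_def t_def by (simp_all add: field_simps)
  have err: "r ^ 6 * m\<^sup>2 / n ^ 3 = u\<^sup>2 / t"
    unfolding u_def t_def using r n by (simp add: field_simps eval_nat_numeral)
  have "r ^ 8 * m ^ 3 / n ^ 4 = u * (r ^ 6 * m\<^sup>2 / n ^ 3)"
    unfolding u_def using n by (simp add: field_simps eval_nat_numeral)
  also have "\<dots> \<le> K * (r ^ 6 * m\<^sup>2 / n ^ 3)"
    using u n by (intro mult_right_mono) simp_all
  finally show "r ^ 8 * m ^ 3 / n ^ 4 \<le> K * (r ^ 6 * m\<^sup>2 / n ^ 3)" .
  have "2 * r ^ 10 * m ^ 4 / n ^ 5 = 2 * u\<^sup>2 * (r ^ 6 * m\<^sup>2 / n ^ 3)"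
    unfolding u_def using n by (simp add: field_simps eval_nat_numeral)
  also have "\<dots> \<le> 2 * K\<^sup>2 * (r ^ 6 * m\<^sup>2 / n ^ 3)"
    using u n by (intro mult_right_mono mult_left_mono power_mono) simp_all
  finally show "2 * r ^ 10 * m ^ 4 / n ^ 5 \<le> 2 * K\<^sup>2 * (r ^ 6 * m\<^sup>2 / n ^ 3)" .
  show "(r ^ 4 * m\<^sup>2 / n\<^sup>2) ^ k / fact k \<le> r ^ 6 * m\<^sup>2 / n ^ 3"
  proof -
    have "t ^ 1 * u ^ (2 * k - 2) \<le> fact k"
      using t k u K fact by (intro power_mult_power_le_fact) simp_all
    then have "u\<^sup>2 * (t * u ^ (2 * k - 2)) \<le> u\<^sup>2 * fact k"
      by (simp add: mult_left_mono)
    moreover have "(r ^ 4 * m\<^sup>2 / n\<^sup>2) ^ k = u\<^sup>2 * u ^ (2 * k - 2)"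
    proof -
      have "r ^ 4 * m\<^sup>2 / n\<^sup>2 = u\<^sup>2"
        unfolding u_def by (simp add: power_divide power_mult_distrib flip: power_mult)
      moreover have "2 * k = 2 + (2 * k - 2)" using k(1) by simp
      ultimately show ?thesis
        by (metis power_add power_mult)
    qed
    ultimately show ?thesis
      unfolding err using t by (simp add: field_simps)
  qed
  show "n * (r * m / n) ^ k / fact k \<le> r ^ 6 * m\<^sup>2 / n ^ 3"
  proof -
    have "t\<^sup>2 * u ^ (k - 2) \<le> fact k"
      using t k u K fact by (intro power_mult_power_le_fact) simp_all
    then have key: "u\<^sup>2 * (t\<^sup>2 * u ^ (k - 2)) \<le> u\<^sup>2 * fact k"
      by (simp add: mult_left_mono)
    have "n * (r * m / n) ^ k \<le> t * (u\<^sup>2 * u ^ (k - 2))"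
    proof -
      have "n * (r * m / n) ^ k = t * r\<^sup>2 * (u / r) ^ k"
        unfolding u_def t_def using r n by (simp add: field_simps eval_nat_numeral)
      also have "\<dots> = t * u ^ k / r ^ (k - 2)"
      proof -
        have "r ^ k = r\<^sup>2 * r ^ (k - 2)" using k(1) by (metis le_add_diff_inverse power_add)
        then show ?thesis using r by (simp add: power_divide field_simps)
      qed
      also have "\<dots> \<le> t * u ^ k / 1"
        using r t u by (intro divide_left_mono) (simp_all add: one_le_power)
      also have "\<dots> = t * (u\<^sup>2 * u ^ (k - 2))"
        using k(1) by (metis div_by_1 le_add_diff_inverse power_add)
      finally show ?thesis .
    qed
    then have "n * (r * m / n) ^ k / fact k \<le> t * (u\<^sup>2 * u ^ (k - 2)) / fact k"
      by (rule divide_right_mono) simp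
    also have "\<dots> \<le> u\<^sup>2 / t"
      using t key
      by (simp add: field_simps power2_eq_square)
    finally show ?thesis unfolding err .
  qed
qed

lemma card_hypergraphs_diff_pplus_le:
  fixes r n m :: nat and K :: real
  defines "t \<equiv> real n / (real r)\<^sup>2"
  assumes r: "3 \<le> r" and K: "1 \<le> K" and m: "real m \<le> K * t" and t: "exp 1 \<le> t"
    and fact: "\<forall>k. ln t \<le> real k \<longrightarrow> (K\<^sup>2 * exp 2) ^ k \<le> fact k"
  shows "real (card (hypergraphs r n m - hypergraphs_pplus r n m))
           \<le> real (card (hypergraphs r n m)) * ((3 + K + 2 * K\<^sup>2) * (real r ^ 6 * (real m)\<^sup>2 / real n ^ 3))"
proof -
  let ?Hy = "hypergraphs r n m"
  let ?err = "real r ^ 6 * (real m)\<^sup>2 / real n ^ 3"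
  define k where "k = nat \<lceil>ln t\<rceil> + 1"
  have "1 \<le> ln t" using t by (metis exp_gt_zero exp_le_cancel_iff exp_ln order_less_le_trans)
  then have k: "2 \<le> k" "ln t \<le> real k" unfolding k_def by linarith+
  have M: "M4 r n = \<lceil>ln t\<rceil>" "M0star r n = \<lceil>ln t\<rceil>" "0 \<le> M4 r n"
    using \<open>1 \<le> ln t\<close> unfolding M4_def M0star_def t_def by simp_all
  have "1 \<le> t" using t exp_ge_add_one_self[of 1] by linarith
  then have "(real r)\<^sup>2 \<le> real n" using r unfolding t_def by (simp add: le_divide_eq)
  then have "r * r \<le> n" by (simp add: power2_eq_square flip: of_nat_mult)
  moreover have "r \<le> r * r" using r by simp
  ultimately have rn: "r \<le> n" "0 < real n" using r by linarith+
  have "?Hy - hypergraphs_pplus r n m \<subseteq>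
      {H \<in> ?Hy. heavy_pair H} \<union> {H \<in> ?Hy. linked_path H} \<union> {H \<in> ?Hy. touching_linked_pairs H}
      \<union> {H \<in> ?Hy. disjoint_linked_pairs k H} \<union> {H \<in> ?Hy. \<exists>v\<in>{1..n}. k \<le> degree H v}"
  proof
    fix H assume H: "H \<in> ?Hy - hypergraphs_pplus r n m"
    have "int (degree H v) \<le> M0star r n" if "\<not> k \<le> degree H v" for v
      using that M(2,3) unfolding k_def M(1) by linarith
    then show "H \<in> {H \<in> ?Hy. heavy_pair H} \<union> {H \<in> ?Hy. linked_path H} \<union> {H \<in> ?Hy. touching_linked_pairs H}
      \<union> {H \<in> ?Hy. disjoint_linked_pairs k H} \<union> {H \<in> ?Hy. \<exists>v\<in>{1..n}. k \<le> degree H v}"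
      using hypergraphs_pplus_if_no_configuration[OF _ _ _ _ _ \<open>0 \<le> M4 r n\<close>, of H m] H
      unfolding k_def M(1) by blast
  qed
  then have "card (?Hy - hypergraphs_pplus r n m) \<le>
      card ({H \<in> ?Hy. heavy_pair H} \<union> {H \<in> ?Hy. linked_path H} \<union> {H \<in> ?Hy. touching_linked_pairs H}
      \<union> {H \<in> ?Hy. disjoint_linked_pairs k H} \<union> {H \<in> ?Hy. \<exists>v\<in>{1..n}. k \<le> degree H v})"
    by (intro card_mono) simp_all
  also have "\<dots> \<le>
      card {H \<in> ?Hy. heavy_pair H} + card {H \<in> ?Hy. linked_path H} + card {H \<in> ?Hy. touching_linked_pairs H}
      + card {H \<in> ?Hy. disjoint_linked_pairs k H} + card {H \<in> ?Hy. \<exists>v\<in>{1..n}. k \<le> degree H v}"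
    by (intro order_trans[OF card_Un_le] add_mono le_refl)
  finally have "real (card (?Hy - hypergraphs_pplus r n m)) \<le>
      real (card ?Hy) * ?err + real (card ?Hy) * (real r ^ 8 * real m ^ 3 / real n ^ 4)
      + real (card ?Hy) * (2 * real r ^ 10 * real m ^ 4 / real n ^ 5)
      + real (card ?Hy) * ((real r ^ 4 * (real m)\<^sup>2 / (real n)\<^sup>2) ^ k / fact k)
      + real (card ?Hy) * (real n * (real r * real m / real n) ^ k / fact k)"
    using card_heavy_pair_le[OF rn(1), of m] card_linked_path_le[OF rn(1), of m]
      card_touching_linked_pairs_le[OF rn(1), of m] card_disjoint_linked_pairs_le[OF rn(1), of m k]
      card_high_degree_le[OF rn(1), of m k]
    by linarith
  also have "\<dots> \<le> real (card ?Hy) * ?err + real (card ?Hy) * (K * ?err)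
      + real (card ?Hy) * (2 * K\<^sup>2 * ?err) + real (card ?Hy) * ?err + real (card ?Hy) * ?err"
    using first_moment_terms_le[of "real r" "real n" "real m" K k] r rn m K k fact
    unfolding t_def by (intro add_mono mult_left_mono) simp_all
  also have "\<dots> = real (card ?Hy) * ((3 + K + 2 * K\<^sup>2) * ?err)"
    using rn(2) by (simp add: field_simps)
  finally show ?thesis .
qed

lemma card_hypergraphs_pos:
  assumes r: "3 \<le> r" "r \<le> n" and m: "real m \<le> (real n / (real r)\<^sup>2)\<^sup>2"
  shows "0 < card (hypergraphs r n m)"
proof -
  have "1 \<le> real n * real r" using r by (simp flip: of_nat_mult)
  then have "(real n / (real r)\<^sup>2)\<^sup>2 \<le> (real n / real r) ^ 3"
    using r by (simp add: power_divide field_simps eval_nat_numeral mult_left_mono)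
  also have "\<dots> \<le> (real n / real r) ^ r"
    using r by (intro power_increasing) simp_all
  also have "\<dots> \<le> real (n choose r)"
    using r by (intro binomial_ge_n_over_k_pow_k)
  finally have "m \<le> n choose r" using m by simp
  then show ?thesis by (simp add: card_hypergraphs)
qed

lemma one_minus_card_ratio:
  assumes "finite B" "A \<subseteq> B" "0 < card B"
  shows "1 - real (card A) / real (card B) = real (card (B - A)) / real (card B)"
  using assms card_mono[OF assms(1,2)]
  by (simp add: card_Diff_subset finite_subset of_nat_diff diff_divide_distrib card_gt_0_iff)

lemma hypergraphs_plus_ratio_le:
  fixes r n m :: nat and K :: real
  defines "t \<equiv> real n / (real r)\<^sup>2" and "err \<equiv> real r ^ 6 * (real m)\<^sup>2 / real n ^ 3"
  assumes "3 \<le> r" "1 \<le> K" "K \<le> t" "real m \<le> K * t" "exp 1 \<le> t"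
    and "\<forall>k. ln t \<le> real k \<longrightarrow> (K\<^sup>2 * exp 2) ^ k \<le> fact k"
  shows "\<bar>1 - real (card (hypergraphs_plus r n m)) / real (card (hypergraphs r n m))\<bar> \<le> (3 + K + 2 * K\<^sup>2) * err"
    and "\<bar>1 - real (card (hypergraphs_pplus r n m)) / real (card (hypergraphs r n m))\<bar> \<le> (3 + K + 2 * K\<^sup>2) * err"
proof -
  let ?Hy = "hypergraphs r n m"
  have "1 \<le> t" using assms(7) exp_ge_add_one_self[of 1] by linarith
  then have "r * r \<le> n"
    using assms(3) unfolding t_def by (simp add: le_divide_eq power2_eq_square flip: of_nat_mult)
  then have "r \<le> n"
    using order_trans[of r "r * r" n] by simp
  moreover have "K * t \<le> t * t"
    using assms(5) \<open>1 \<le> t\<close> by (intro mult_right_mono) simp_all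
  then have "real m \<le> t\<^sup>2"
    using assms(6) by (simp add: power2_eq_square)
  ultimately have Hy: "0 < card ?Hy"
    using assms(3) card_hypergraphs_pos unfolding t_def by blast
  have sub: "hypergraphs_pplus r n m \<subseteq> hypergraphs_plus r n m" "hypergraphs_plus r n m \<subseteq> ?Hy"
    unfolding hypergraphs_pplus_def hypergraphs_plus_def by auto
  have pplus: "real (card (?Hy - hypergraphs_pplus r n m)) \<le> real (card ?Hy) * ((3 + K + 2 * K\<^sup>2) * err)"
    using card_hypergraphs_diff_pplus_le[OF assms(3,4) assms(6,7,8)[unfolded t_def]] unfolding err_def .
  have plus: "real (card (?Hy - hypergraphs_plus r n m)) \<le> real (card ?Hy) * ((3 + K + 2 * K\<^sup>2) * err)"
    using sub by (intro order_trans[OF _ pplus] of_nat_mono card_mono) auto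
  have "real (card (?Hy - A)) / real (card ?Hy) \<le> (3 + K + 2 * K\<^sup>2) * err"
    if "real (card (?Hy - A)) \<le> real (card ?Hy) * ((3 + K + 2 * K\<^sup>2) * err)" for A
    using that Hy by (simp add: divide_le_eq mult.commute)
  then show
    "\<bar>1 - real (card (hypergraphs_plus r n m)) / real (card ?Hy)\<bar> \<le> (3 + K + 2 * K\<^sup>2) * err"
    "\<bar>1 - real (card (hypergraphs_pplus r n m)) / real (card ?Hy)\<bar> \<le> (3 + K + 2 * K\<^sup>2) * err"
    using plus pplus sub Hy by (simp_all add: one_minus_card_ratio)
qed

lemma eventually_power_le_fact: "eventually (\<lambda>k. (c::real) ^ k \<le> fact k) sequentially"
proof -
  have "(\<lambda>k. inverse (fact k) * c ^ k) \<longlonglongrightarrow> 0"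
    by (rule summable_LIMSEQ_zero[OF summable_exp])
  then have "eventually (\<lambda>k. \<bar>inverse (fact k) * c ^ k\<bar> < 1) sequentially"
    using order_tendstoD(2)[OF tendsto_rabs_zero] by fastforce
  then show ?thesis
    by eventually_elim (simp add: abs_mult field_simps)
qed

lemma eventually_le_div_square:
  fixes r :: "nat \<Rightarrow> nat" and B :: real
  assumes "(\<lambda>n. real (r n)) \<in> o(\<lambda>n. sqrt (real n))" "\<forall>n. 0 < r n" "0 < B"
  shows "eventually (\<lambda>n. B \<le> real n / (real (r n))\<^sup>2) at_top"
proof -
  have "eventually (\<lambda>n. norm (real (r n)) \<le> (1 / sqrt B) * norm (sqrt (real n))) at_top"
    using assms(1,3) by (intro landau_o.smallD) simp_all
  then show ?thesis
  proof eventually_elim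
    case (elim n)
    then have "(real (r n))\<^sup>2 \<le> (sqrt (real n) / sqrt B)\<^sup>2"
      by (intro power_mono) simp_all
    then show ?case
      using assms(2,3) by (simp add: power_divide field_simps)
  qed
qed

theorem theorem7p2:
  fixes r m :: "nat \<Rightarrow> nat"
  assumes "\<forall>n. r n \<ge> 3"
    and "(\<lambda>n. real (r n)) \<in> o(\<lambda>n. sqrt (real n))"
    and "\<forall>\<^sub>F n in at_top. ln (real n / (real (r n))\<^sup>2) \<le> real (m n)"
    and "(\<lambda>n. real (m n)) \<in> O(\<lambda>n. real n / (real (r n))\<^sup>2)"
  shows "(\<lambda>n. 1 - real (card (hypergraphs_plus (r n) n (m n))) / real (card (hypergraphs (r n) n (m n))))
           \<in> O(\<lambda>n. (real (r n))^6 * (real (m n))\<^sup>2 / (real n)^3) \<and>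
         (\<lambda>n. 1 - real (card (hypergraphs_pplus (r n) n (m n))) / real (card (hypergraphs (r n) n (m n))))
           \<in> O(\<lambda>n. (real (r n))^6 * (real (m n))\<^sup>2 / (real n)^3)"
proof -
  obtain c where c: "eventually (\<lambda>n. norm (real (m n)) \<le> c * norm (real n / (real (r n))\<^sup>2)) at_top"
    using assms(4) by (rule landau_o.bigE)
  define K where "K = max 1 c"
  obtain k0 where k0: "\<forall>k\<ge>k0. (K\<^sup>2 * exp 2) ^ k \<le> fact k"
    using eventually_power_le_fact unfolding eventually_sequentially by blast
  have "eventually (\<lambda>n. max K (exp (max 1 (real k0))) \<le> real n / (real (r n))\<^sup>2) at_top"
    using assms(1,2) by (intro eventually_le_div_square) (auto simp: K_def intro: order.strict_trans2 less_le_trans[of 0 3])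
  with c have "eventually (\<lambda>n.
      \<bar>1 - real (card (hypergraphs_plus (r n) n (m n))) / real (card (hypergraphs (r n) n (m n)))\<bar>
        \<le> (3 + K + 2 * K\<^sup>2) * \<bar>(real (r n))^6 * (real (m n))\<^sup>2 / (real n)^3\<bar> \<and>
      \<bar>1 - real (card (hypergraphs_pplus (r n) n (m n))) / real (card (hypergraphs (r n) n (m n)))\<bar>
        \<le> (3 + K + 2 * K\<^sup>2) * \<bar>(real (r n))^6 * (real (m n))\<^sup>2 / (real n)^3\<bar>) at_top"
  proof eventually_elim
    case (elim n)
    define t where "t = real n / (real (r n))\<^sup>2"
    have "K \<le> t" "exp (max 1 (real k0)) \<le> t"
      using elim(2) unfolding t_def by simp_all
    moreover have "exp 1 \<le> exp (max 1 (real k0))" "exp (real k0) \<le> exp (max 1 (real k0))"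
      by simp_all
    ultimately have t: "K \<le> t" "exp 1 \<le> t" "exp (real k0) \<le> t" "0 < t"
      using exp_gt_zero[of 1] by linarith+
    have "real (m n) \<le> c * t"
      using elim(1) t(4) by (simp add: t_def)
    also have "\<dots> \<le> K * t"
      using t(4) unfolding K_def by (intro mult_right_mono) simp_all
    finally have "real (m n) \<le> K * t" .
    moreover have "\<forall>k. ln t \<le> real k \<longrightarrow> (K\<^sup>2 * exp 2) ^ k \<le> fact k"
      using k0 t(3,4) by (metis exp_le_cancel_iff exp_ln of_nat_le_iff order_trans)
    ultimately show ?case
      using hypergraphs_plus_ratio_le[of "r n" K n "m n"] assms(1) t unfolding t_def K_def by simp
  qed
  then show ?thesis
    by (auto intro!: landau_o.bigI[of "3 + K + 2 * K\<^sup>2"] elim: eventually_mono simp: K_def add_pos_nonneg)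
qed

end
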